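(* There is an absolute constant $c>0$ such that the following holds. Let $K\ge4$ and $T\ge K^3$. Define valuations $v_i=\tfrac12+\frac{i-1}{4K-2i-2}$ for $i\in[K]$ (so $v_1=\tfrac12$, $v_K=1$), and set $\varepsilon=\frac{1}{3\sqrt{24}}\sqrt{(K-2)/T}$. For $j\in\{2,\dots,K-1\}$ let $Q_j$ be the distribution on $\{v_1,\dots,v_K\}$ with $Q_j(v_{j-1})=\frac{1}{2K-2}-\varepsilon$, $Q_j(v_j)=\frac{1}{2K-2}+\varepsilon$, $Q_j(v_K)=\tfrac12$, and $Q_j(v_i)=\frac{1}{2K-2}$ for all other $i$. Let $J$ be uniform on $\{2,\dots,K-1\}$ and $Q_\star=Q_J$. Then for every (possibly randomized) non-contextual pricing algorithm $\mathcal{A}$, $\mathbb{E}[R(T)]\ge c\sqrt{KT}$, where the expectation is over $J$, the valuations, and $\mathcal{A}$.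
   Context: Non-contextual pricing: a valuation distribution $Q_\star$ on $[0,1]$ is fixed. In each round $t=1,\dots,T$, a valuation $V_t\sim Q_\star$ is drawn i.i.d.; the seller, based on $(p_\tau,y_\tau)_{\tau<t}$, posts $p_t\in[0,1]$ and observes $y_t=\mathbf{1}\{V_t\ge p_t\}$. With $\mathsf{dem}_Q(p)=\mathbb{P}_{v\sim Q}[v\ge p]$, $\mathsf{rev}_Q(p)=p\,\mathsf{dem}_Q(p)$ and $\mathsf{gap}_Q(p)=\max_{x\in[0,1]}\mathsf{rev}_Q(x)-\mathsf{rev}_Q(p)$, the regret is $R(T)=\sum_{t=1}^T\mathsf{gap}_{Q_\star}(p_t)$. *)

theory Defs
  imports "HOL-Probability.Probability"
begin

definition dem :: "real pmf \<Rightarrow> real \<Rightarrow> real" where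
  "dem Q p = measure_pmf.prob Q {v. v \<ge> p}"

definition rev :: "real pmf \<Rightarrow> real \<Rightarrow> real" where
  "rev Q p = p * dem Q p"

definition gap :: "real pmf \<Rightarrow> real \<Rightarrow> real" where
  "gap Q p = (SUP x\<in>{0..1}. rev Q x) - rev Q p"

type_synonym policy = "(real \<times> bool) list \<Rightarrow> real"

text \<open>History before round t (rounds indexed from 0) given the valuation sequence V.\<close>
fun hist :: "policy \<Rightarrow> (nat \<Rightarrow> real) \<Rightarrow> nat \<Rightarrow> (real \<times> bool) list" where
  "hist pol V 0 = []"
| "hist pol V (Suc t) = (let h = hist pol V t; p = pol h in h @ [(p, V t \<ge> p)])"

definition regret :: "real pmf \<Rightarrow> policy \<Rightarrow> (nat \<Rightarrow> real) \<Rightarrow> nat \<Rightarrow> real" where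
  "regret Q pol V T = (\<Sum>t<T. gap Q (pol (hist pol V t)))"

definition val :: "nat \<Rightarrow> nat \<Rightarrow> real" where
  "val K i = 1/2 + (real i - 1) / (4 * real K - 2 * real i - 2)"

definition eps :: "nat \<Rightarrow> nat \<Rightarrow> real" where
  "eps K T = (1 / (3 * sqrt 24)) * sqrt ((real K - 2) / real T)"

definition wt :: "nat \<Rightarrow> nat \<Rightarrow> nat \<Rightarrow> nat \<Rightarrow> real" where
  "wt K T j i =
     (if i = K then 1/2
      else if i = j - 1 then 1 / (2 * real K - 2) - eps K T
      else if i = j then 1 / (2 * real K - 2) + eps K T
      else 1 / (2 * real K - 2))"

definition Qj :: "nat \<Rightarrow> nat \<Rightarrow> nat \<Rightarrow> real pmf" where
  "Qj K T j = embed_pmf (\<lambda>x. \<Sum>i\<in>{1..K}. if val K i = x then wt K T j i else 0)"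

definition exp_regret :: "nat \<Rightarrow> nat \<Rightarrow> policy \<Rightarrow> real" where
  "exp_regret K T pol =
     measure_pmf.expectation (pmf_of_set {2..K-1}) (\<lambda>j.
       measure_pmf.expectation (Pi_pmf {..<T} 0 (\<lambda>_. Qj K T j)) (\<lambda>V. regret (Qj K T j) pol V T))"

end

theory Submission
  imports Defs
begin

text \<open>Let \<open>Q\<^sub>0\<close> be the instance with \<open>\<epsilon> = 0\<close>: it is an equal-revenue distribution, every \<open>v\<^sub>i\<close> earning
  revenue exactly \<open>1/2\<close> and no price earning more. \<open>Q\<^sub>j\<close> moves mass \<open>\<epsilon>\<close> from \<open>v\<^sub>j\<^sub>-\<^sub>1\<close> to \<open>v\<^sub>j\<close>, which raises
  the revenue of exactly the prices in \<open>(v\<^sub>j\<^sub>-\<^sub>1, v\<^sub>j]\<close>, so under \<open>Q\<^sub>j\<close> every round priced outside this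
  interval costs regret at least \<open>\<epsilon>/2\<close>. A policy must thus spend most rounds in the interval of
  the unknown \<open>j\<close>. By a Donsker--Varadhan (Pinsker-type) argument along the tree of histories, whose
  per-round divergence is the chi-square distance \<open>\<epsilon>\<^sup>2/(q(1-q))\<close> and is paid only in rounds inside
  the interval, the expected fraction of such rounds under \<open>Q\<^sub>j\<close> exceeds that under \<open>Q\<^sub>0\<close> by at most a
  constant plus a multiple of the latter. These fractions under \<open>Q\<^sub>0\<close> sum to at most \<open>1\<close> over \<open>j\<close>, so
  on average over \<open>j\<close> a constant fraction of rounds lies outside the interval, giving regret of
  order \<open>\<epsilon> T \<asymp> \<surd>(K T)\<close>.\<close>

section \<open>Expectations over the tree of histories\<close>

definition prob_valued :: "(real \<Rightarrow> real) \<Rightarrow> bool" where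
  "prob_valued d \<longleftrightarrow> (\<forall>p. 0 \<le> d p \<and> d p \<le> 1)"

text \<open>The expectation of \<open>F\<close> at the history reached from \<open>h\<close> after \<open>n\<close> more rounds when a price \<open>p\<close>
  sells with probability \<open>d p\<close>. I.i.d. valuations from \<open>Q\<close> give \<open>d = dem Q\<close> (\<open>nn_integral_hist_Pi_pmf\<close>);
  the change of measure also uses the demand of \<open>Q\<^sub>0\<close>, which is not one of the \<open>Qj\<close>.\<close>

fun hist_expect ::
  "(real \<Rightarrow> real) \<Rightarrow> policy \<Rightarrow> nat \<Rightarrow> ((real \<times> bool) list \<Rightarrow> real) \<Rightarrow> (real \<times> bool) list \<Rightarrow> real"
where
  "hist_expect d pol 0 F h = F h"
| "hist_expect d pol (Suc n) F h =
     d (pol h) * hist_expect d pol n F (h @ [(pol h, True)]) +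
     (1 - d (pol h)) * hist_expect d pol n F (h @ [(pol h, False)])"

lemma hist_expect_mono:
  assumes d: "prob_valued d" and FG: "\<And>h'. length h' = length h + n \<Longrightarrow> F h' \<le> G h'"
  shows "hist_expect d pol n F h \<le> hist_expect d pol n G h"
  using FG
proof (induction n arbitrary: h)
  case 0
  then show ?case by simp
next
  case (Suc n)
  have IH: "hist_expect d pol n F (h @ [(pol h, b)]) \<le> hist_expect d pol n G (h @ [(pol h, b)])" for b
    by (rule Suc.IH) (use Suc.prems in auto)
  have "0 \<le> d (pol h)" "d (pol h) \<le> 1"
    using d by (auto simp: prob_valued_def)
  then show ?case
    using IH[of True] IH[of False] by (simp add: add_mono mult_left_mono)
qed

lemma hist_expect_const [simp]: "hist_expect d pol n (\<lambda>_. c) h = c"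
  by (induction n arbitrary: h) (simp_all add: algebra_simps)

lemma hist_expect_linear:
  "hist_expect d pol n (\<lambda>h. a * F h + b * G h) h = a * hist_expect d pol n F h + b * hist_expect d pol n G h"
  by (induction n arbitrary: h) (simp_all add: algebra_simps)

lemma hist_expect_scale: "hist_expect d pol n (\<lambda>h. a * F h) h = a * hist_expect d pol n F h"
  by (induction n arbitrary: h) (simp_all add: algebra_simps)

lemma hist_expect_add_const: "hist_expect d pol n (\<lambda>h. a + F h) h = a + hist_expect d pol n F h"
  by (induction n arbitrary: h) (simp_all add: algebra_simps)

lemma hist_expect_sum:
  "finite S \<Longrightarrow> hist_expect d pol n (\<lambda>h. \<Sum>j\<in>S. F j h) h = (\<Sum>j\<in>S. hist_expect d pol n (F j) h)"
  by (induction S rule: finite_induct) (simp_all add: hist_expect_linear[where a = 1 and b = 1, simplified])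

lemma hist_expect_nonneg:
  "prob_valued d \<Longrightarrow> (\<And>h. 0 \<le> F h) \<Longrightarrow> 0 \<le> hist_expect d pol n F h"
  using hist_expect_mono[of d h n "\<lambda>_. 0" F pol] by simp

lemma convex_comb_pos:
  fixes q x1 x2 :: real
  assumes "0 \<le> q" "q \<le> 1" "0 < x1" "0 < x2"
  shows "0 < q * x1 + (1 - q) * x2"
  using assms by (cases "q = 1") (auto intro: add_pos_nonneg add_nonneg_pos)

lemma hist_expect_pos:
  assumes "prob_valued d" "\<And>h. 0 < F h"
  shows "0 < hist_expect d pol n F h"
  using assms
  by (induction n arbitrary: h) (auto simp: prob_valued_def intro!: convex_comb_pos)

lemma hist_expect_Suc_last:
  "hist_expect d pol (Suc n) F h =
     hist_expect d pol n (\<lambda>h'. d (pol h') * F (h' @ [(pol h', True)]) +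
                               (1 - d (pol h')) * F (h' @ [(pol h', False)])) h"
proof (induction n arbitrary: h)
  case 0
  then show ?case by simp
next
  case (Suc n)
  show ?case
    unfolding hist_expect.simps(2)[of d pol "Suc n" F] Suc.IH by simp
qed

definition cost_along :: "(real \<Rightarrow> real) \<Rightarrow> (real \<times> bool) list \<Rightarrow> real" where
  "cost_along c h = (\<Sum>x\<leftarrow>h. c (fst x))"

lemma cost_along_Nil [simp]: "cost_along c [] = 0"
  and cost_along_Cons [simp]: "cost_along c (x # h) = c (fst x) + cost_along c h"
  and cost_along_snoc [simp]: "cost_along c (h @ [x]) = cost_along c h + c (fst x)"
  by (simp_all add: cost_along_def)

lemma cost_along_mono: "(\<And>p. c p \<le> c' p) \<Longrightarrow> cost_along c h \<le> cost_along c' h"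
  by (induction h) (auto intro: add_mono)

lemma cost_along_nonneg: "(\<And>p. 0 \<le> c p) \<Longrightarrow> 0 \<le> cost_along c h"
  by (induction h) auto

lemma cost_along_linear:
  "cost_along (\<lambda>p. a * c p + b * c' p) h = a * cost_along c h + b * cost_along c' h"
  by (induction h) (auto simp: algebra_simps)

lemma cost_along_scale: "cost_along (\<lambda>p. a * c p) h = a * cost_along c h"
  by (induction h) (auto simp: algebra_simps)

lemma cost_along_const: "cost_along (\<lambda>_. a) h = a * real (length h)"
  by (induction h) (auto simp: algebra_simps)

lemma cost_along_sum:
  "finite S \<Longrightarrow> cost_along (\<lambda>p. \<Sum>j\<in>S. f j p) h = (\<Sum>j\<in>S. cost_along (f j) h)"
  by (induction h) (auto simp: sum.distrib)

section \<open>Change of measure along the history tree\<close>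

lemma ln_convex_comb_ge:
  fixes q x1 x2 :: real
  assumes "0 \<le> q" "q \<le> 1" "0 < x1" "0 < x2"
  shows "q * ln x1 + (1 - q) * ln x2 \<le> ln (q * x1 + (1 - q) * x2)"
  using concave_onD[OF ln_concave, of "1 - q" x1 x2] assms by simp

lemma ln_convex_comb_chi_square:
  fixes q0 q1 x1 x2 :: real
  assumes "0 \<le> q0" "q0 \<le> 1" "0 < q1" "q1 < 1" "0 < x1" "0 < x2"
  shows "q0 * ln x1 + (1 - q0) * ln x2 \<le> (q0 - q1)^2 / (q1 * (1 - q1)) + ln (q1 * x1 + (1 - q1) * x2)"
proof -
  define m where "m = q1 * x1 + (1 - q1) * x2"
  have m: "0 < m"
    unfolding m_def using assms by (intro convex_comb_pos) auto
  \<comment> \<open>\<open>ln u \<le> u - 1\<close> applied at \<open>u = s x / (r m)\<close> and at \<open>u = r / s\<close>\<close>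
  have key: "r * ln (x / m) \<le> r * (r / s - 1) + s * x / m - r"
    if "0 \<le> r" "0 < s" "0 < x" for r s x
  proof (cases "r = 0")
    case True
    then show ?thesis using that m by simp
  next
    case False
    with that have r: "0 < r" by simp
    have "ln (x / m) = ln (s * x / (r * m)) + ln (r / s)"
      using r that m by (simp add: ln_div ln_mult)
    also have "\<dots> \<le> (s * x / (r * m) - 1) + (r / s - 1)"
      using r that m by (intro add_mono ln_le_minus_one) auto
    finally have "r * ln (x / m) \<le> r * ((s * x / (r * m) - 1) + (r / s - 1))"
      using r by (simp add: mult_left_mono)
    also have "\<dots> = r * (r / s - 1) + s * x / m - r"
      using r m by (simp add: field_simps)
    finally show ?thesis .
  qed
  have k1: "q0 * ln (x1 / m) \<le> q0 * (q0 / q1 - 1) + q1 * x1 / m - q0"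
    using key[of q0 q1 x1] assms by simp
  have k2: "(1 - q0) * ln (x2 / m) \<le> (1 - q0) * ((1 - q0) / (1 - q1) - 1) + (1 - q1) * x2 / m - (1 - q0)"
    using key[of "1 - q0" "1 - q1" x2] assms by simp
  have one: "q1 * x1 / m + (1 - q1) * x2 / m = 1"
    using m by (simp add: m_def add_divide_distrib[symmetric])
  have chi: "q0 * (q0 / q1 - 1) + (1 - q0) * ((1 - q0) / (1 - q1) - 1) = (q0 - q1)^2 / (q1 * (1 - q1))"
    using assms by (simp add: field_simps power2_eq_square)
  have "q0 * ln (x1 / m) + (1 - q0) * ln (x2 / m) = q0 * ln x1 + (1 - q0) * ln x2 - ln m"
    using m assms by (simp add: ln_div algebra_simps)
  then show ?thesis
    using k1 k2 one chi by (simp add: m_def)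
qed

lemma exp_minus_le_quadratic:
  fixes x :: real
  assumes "0 \<le> x"
  shows "exp (- x) \<le> 1 - x + x^2 / 2"
proof -
  have pos: "0 < 1 - x + x^2 / 2"
    using zero_le_power2[of "x - 1"] by (simp add: power2_eq_square algebra_simps)
  have "(1 - x + x^2 / 2) * (1 + x + x^2 / 2) = 1 + x^4 / 4"
    by (simp add: algebra_simps power2_eq_square power4_eq_xxxx)
  then have "1 \<le> (1 - x + x^2 / 2) * (1 + x + x^2 / 2)"
    by simp
  also have "\<dots> \<le> (1 - x + x^2 / 2) * exp x"
    using exp_lower_Taylor_quadratic[OF assms] pos by (intro mult_left_mono) auto
  finally show ?thesis
    using pos by (simp add: exp_minus field_simps)
qed

text \<open>The chain rule of relative entropy along the history tree, in its Donsker--Varadhan form: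
  \<open>c p\<close> bounds the divergence between the sale distributions at price \<open>p\<close>.\<close>

lemma hist_expect_Donsker_Varadhan:
  assumes d0: "prob_valued d0" and d1: "prob_valued d1"
    and step: "\<And>p x1 x2. 0 < x1 \<Longrightarrow> 0 < x2 \<Longrightarrow>
       d0 p * ln x1 + (1 - d0 p) * ln x2 \<le> c p + ln (d1 p * x1 + (1 - d1 p) * x2)"
  shows "hist_expect d0 pol n (\<lambda>h'. G h' - cost_along c h') h
           \<le> ln (hist_expect d1 pol n (\<lambda>h'. exp (G h')) h) - cost_along c h"
proof (induction n arbitrary: h)
  case 0
  then show ?case by simp
next
  case (Suc n)
  let ?p = "pol h"
  define A where "A b = hist_expect d0 pol n (\<lambda>h'. G h' - cost_along c h') (h @ [(?p, b)])" for b
  define B where "B b = hist_expect d1 pol n (\<lambda>h'. exp (G h')) (h @ [(?p, b)])" for b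
  have IH: "A b \<le> ln (B b) - cost_along c h - c ?p" for b
    using Suc.IH[of "h @ [(?p, b)]"] by (simp add: A_def B_def)
  have B_pos: "0 < B b" for b
    unfolding B_def by (rule hist_expect_pos[OF d1]) simp
  have "0 \<le> d0 ?p" "d0 ?p \<le> 1"
    using d0 by (auto simp: prob_valued_def)
  then have "hist_expect d0 pol (Suc n) (\<lambda>h'. G h' - cost_along c h') h
      \<le> d0 ?p * (ln (B True) - cost_along c h - c ?p) + (1 - d0 ?p) * (ln (B False) - cost_along c h - c ?p)"
    using IH by (simp add: A_def[symmetric] add_mono mult_left_mono)
  also have "\<dots> = d0 ?p * ln (B True) + (1 - d0 ?p) * ln (B False) - c ?p - cost_along c h"
    by (simp add: algebra_simps)
  also have "\<dots> \<le> ln (d1 ?p * B True + (1 - d1 ?p) * B False) - cost_along c h"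
    using step[OF B_pos[of True] B_pos[of False], of "pol h"] by simp
  finally show ?case
    by (simp add: B_def)
qed

lemma ln_hist_expect_exp_le:
  assumes d: "prob_valued d" and f: "\<And>h. length h = n \<Longrightarrow> 0 \<le> f h \<and> f h \<le> 1"
    and "0 \<le> \<mu>"
  shows "ln (hist_expect d pol n (\<lambda>h. exp (- \<mu> * f h)) []) \<le> - \<mu> * hist_expect d pol n f [] + \<mu>^2 / 2"
proof -
  define b where "b = hist_expect d pol n f []"
  have "hist_expect d pol n (\<lambda>_. 0) [] \<le> b" "b \<le> hist_expect d pol n (\<lambda>_. 1) []"
    unfolding b_def by (rule hist_expect_mono[OF d], use f in simp)+
  then have b: "0 \<le> b" "b \<le> 1" by simp_all
  have convex: "exp (- \<mu> * f h) \<le> 1 + ((- 1) * f h + exp (- \<mu>) * f h)" if "length h = n" for h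
    using convex_onD[OF exp_convex, of "f h" 0 "- \<mu>"] f[OF that] by (simp add: algebra_simps)
  have "hist_expect d pol n (\<lambda>h. exp (- \<mu> * f h)) [] \<le> hist_expect d pol n (\<lambda>h. 1 + ((- 1) * f h + exp (- \<mu>) * f h)) []"
    using convex by (intro hist_expect_mono[OF d]) simp
  also have "\<dots> = 1 - b + exp (- \<mu>) * b"
    using hist_expect_linear[of d pol n "- 1" f "exp (- \<mu>)" f "[]"]
    by (simp add: hist_expect_add_const b_def)
  also have "\<dots> \<le> 1 - b + (1 - \<mu> + \<mu>^2 / 2) * b"
    using exp_minus_le_quadratic[OF \<open>0 \<le> \<mu>\<close>] b by (simp add: mult_right_mono)
  also have "\<dots> \<le> 1 + (- \<mu> * b + \<mu>^2 / 2)"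
    using mult_left_le_one_le[of "\<mu>^2 / 2" b] b by (simp add: algebra_simps)
  also have "\<dots> \<le> exp (- \<mu> * b + \<mu>^2 / 2)"
    by (rule exp_ge_add_one_self)
  finally show ?thesis
    unfolding b_def[symmetric]
    by (subst ln_exp[symmetric], subst ln_le_cancel_iff) (auto intro: hist_expect_pos[OF d])
qed

lemma hist_expect_diff_le:
  assumes d0: "prob_valued d0" and d1: "prob_valued d1"
    and step: "\<And>p x1 x2. 0 < x1 \<Longrightarrow> 0 < x2 \<Longrightarrow>
       d0 p * ln x1 + (1 - d0 p) * ln x2 \<le> c p + ln (d1 p * x1 + (1 - d1 p) * x2)"
    and f: "\<And>h. length h = n \<Longrightarrow> 0 \<le> f h \<and> f h \<le> 1"
    and "0 \<le> \<mu>"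
  shows "\<mu> * (hist_expect d1 pol n f [] - hist_expect d0 pol n f [])
           \<le> hist_expect d0 pol n (cost_along c) [] + \<mu>^2 / 2"
proof -
  have "- \<mu> * hist_expect d0 pol n f [] - hist_expect d0 pol n (cost_along c) []
      = hist_expect d0 pol n (\<lambda>h. - \<mu> * f h - cost_along c h) []"
    using hist_expect_linear[of d0 pol n "- \<mu>" f "- 1" "cost_along c" "[]"] by simp
  also have "\<dots> \<le> ln (hist_expect d1 pol n (\<lambda>h. exp (- \<mu> * f h)) [])"
    using hist_expect_Donsker_Varadhan[OF d0 d1 step, of pol n "\<lambda>h. - \<mu> * f h" "[]"] by simp
  also have "\<dots> \<le> - \<mu> * hist_expect d1 pol n f [] + \<mu>^2 / 2"
    by (rule ln_hist_expect_exp_le[OF d1 f \<open>0 \<le> \<mu>\<close>])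
  finally show ?thesis
    by (simp add: algebra_simps)
qed

section \<open>Histories under i.i.d. valuations\<close>

lemma hist_cong: "(\<And>s. s < t \<Longrightarrow> V s = V' s) \<Longrightarrow> hist pol V t = hist pol V' t"
  by (induction t) (auto simp: Let_def)

lemma regret_eq_cost_along: "regret Q pol V T = cost_along (gap Q) (hist pol V T)"
  by (induction T) (auto simp: regret_def Let_def)

lemma dem_nonneg: "0 \<le> dem Q p"
  and dem_le_1: "dem Q p \<le> 1"
  by (auto simp: dem_def)

lemma prob_valued_dem: "prob_valued (dem Q)"
  by (simp add: prob_valued_def dem_nonneg dem_le_1)

lemma nn_integral_sale_split:
  assumes "0 \<le> a" "0 \<le> b"
  shows "(\<integral>\<^sup>+y. ennreal (if p \<le> y then a else b) \<partial>measure_pmf Q) = ennreal (dem Q p * a + (1 - dem Q p) * b)"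
proof -
  have compl: "measure Q {y. \<not> p \<le> y} = 1 - dem Q p"
    using measure_pmf.prob_compl[of "{y. p \<le> y}" Q] by (simp add: dem_def Compl_eq_Diff_UNIV[symmetric] Collect_neg_eq)
  have "(\<integral>\<^sup>+y. ennreal (if p \<le> y then a else b) \<partial>measure_pmf Q) =
        (\<integral>\<^sup>+y. ennreal a * indicator {y. p \<le> y} y + ennreal b * indicator {y. \<not> p \<le> y} y \<partial>measure_pmf Q)"
    by (intro nn_integral_cong) (auto split: split_indicator)
  also have "\<dots> = ennreal a * emeasure Q {y. p \<le> y} + ennreal b * emeasure Q {y. \<not> p \<le> y}"
    by (simp add: nn_integral_add nn_integral_cmult_indicator)
  also have "\<dots> = ennreal a * ennreal (dem Q p) + ennreal b * ennreal (1 - dem Q p)"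
    by (simp add: dem_def compl measure_pmf.emeasure_eq_measure)
  finally show ?thesis
    using assms dem_nonneg[of Q p] dem_le_1[of Q p]
    by (simp add: ennreal_mult'' ennreal_plus[symmetric] mult.commute)
qed

lemma Pi_pmf_lessThan_Suc:
  "Pi_pmf {..<Suc t} 0 (\<lambda>_. Q) = map_pmf (\<lambda>(f, y). f(t := y)) (pair_pmf (Pi_pmf {..<t} 0 (\<lambda>_. Q)) Q)"
proof -
  have "Pi_pmf {..<Suc t} 0 (\<lambda>_. Q) = map_pmf (\<lambda>(y, f). f(t := y)) (pair_pmf Q (Pi_pmf {..<t} 0 (\<lambda>_. Q)))"
    using Pi_pmf_insert[of "{..<t}" t 0 "\<lambda>_. Q"] by (simp add: lessThan_Suc)
  also have "\<dots> = map_pmf (\<lambda>(f, y). f(t := y)) (pair_pmf (Pi_pmf {..<t} 0 (\<lambda>_. Q)) Q)"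
    by (subst pair_commute_pmf) (simp add: map_pmf_comp case_prod_beta')
  finally show ?thesis .
qed

lemma nn_integral_hist_Suc:
  assumes F: "\<And>h. 0 \<le> F h"
  shows "(\<integral>\<^sup>+V. ennreal (F (hist pol V (Suc t))) \<partial>measure_pmf (Pi_pmf {..<Suc t} 0 (\<lambda>_. Q)))
       = (\<integral>\<^sup>+V. ennreal (dem Q (pol (hist pol V t)) * F (hist pol V t @ [(pol (hist pol V t), True)]) +
               (1 - dem Q (pol (hist pol V t))) * F (hist pol V t @ [(pol (hist pol V t), False)]))
            \<partial>measure_pmf (Pi_pmf {..<t} 0 (\<lambda>_. Q)))"
proof -
  have hist_upd: "hist pol (V(t := y)) (Suc t) = hist pol V t @ [(pol (hist pol V t), pol (hist pol V t) \<le> y)]"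
    for V y
    using hist_cong[of t "V(t := y)" V pol] by (simp add: Let_def)
  have "(\<integral>\<^sup>+V. ennreal (F (hist pol V (Suc t))) \<partial>measure_pmf (Pi_pmf {..<Suc t} 0 (\<lambda>_. Q)))
      = (\<integral>\<^sup>+V. \<integral>\<^sup>+y. ennreal (F (hist pol (V(t := y)) (Suc t))) \<partial>measure_pmf Q \<partial>measure_pmf (Pi_pmf {..<t} 0 (\<lambda>_. Q)))"
    by (simp add: Pi_pmf_lessThan_Suc case_prod_beta nn_integral_pair_pmf')
  also have "\<dots> = (\<integral>\<^sup>+V. \<integral>\<^sup>+y. ennreal (if pol (hist pol V t) \<le> y
                       then F (hist pol V t @ [(pol (hist pol V t), True)])
                       else F (hist pol V t @ [(pol (hist pol V t), False)])) \<partial>measure_pmf Q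
                  \<partial>measure_pmf (Pi_pmf {..<t} 0 (\<lambda>_. Q)))"
    by (intro nn_integral_cong) (simp only: hist_upd, simp)
  finally show ?thesis
    using F by (simp add: nn_integral_sale_split)
qed

lemma nn_integral_hist_Pi_pmf:
  assumes "\<And>h. 0 \<le> F h"
  shows "(\<integral>\<^sup>+V. ennreal (F (hist pol V t)) \<partial>measure_pmf (Pi_pmf {..<t} 0 (\<lambda>_. Q)))
           = ennreal (hist_expect (dem Q) pol t F [])"
  using assms
proof (induction t arbitrary: F)
  case 0
  then show ?case by simp
next
  case (Suc t)
  let ?G = "\<lambda>h. dem Q (pol h) * F (h @ [(pol h, True)]) + (1 - dem Q (pol h)) * F (h @ [(pol h, False)])"
  have G: "0 \<le> ?G h" for h
    using Suc.prems dem_nonneg[of Q] dem_le_1[of Q] by (auto intro!: add_nonneg_nonneg mult_nonneg_nonneg)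
  have "(\<integral>\<^sup>+V. ennreal (F (hist pol V (Suc t))) \<partial>measure_pmf (Pi_pmf {..<Suc t} 0 (\<lambda>_. Q)))
      = (\<integral>\<^sup>+V. ennreal (?G (hist pol V t)) \<partial>measure_pmf (Pi_pmf {..<t} 0 (\<lambda>_. Q)))"
    using Suc.prems by (rule nn_integral_hist_Suc)
  also have "\<dots> = ennreal (hist_expect (dem Q) pol t ?G [])"
    using G by (rule Suc.IH)
  finally show ?case
    by (simp only: hist_expect_Suc_last)
qed

lemma expectation_regret_eq_hist_expect:
  assumes "\<And>p. 0 \<le> gap Q p"
  shows "measure_pmf.expectation (Pi_pmf {..<T} 0 (\<lambda>_. Q)) (\<lambda>V. regret Q pol V T)
           = hist_expect (dem Q) pol T (cost_along (gap Q)) []"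
proof -
  have nonneg: "0 \<le> cost_along (gap Q) h" for h
    using assms by (rule cost_along_nonneg)
  then have "measure_pmf.expectation (Pi_pmf {..<T} 0 (\<lambda>_. Q)) (\<lambda>V. regret Q pol V T)
      = enn2real (\<integral>\<^sup>+V. ennreal (cost_along (gap Q) (hist pol V T)) \<partial>measure_pmf (Pi_pmf {..<T} 0 (\<lambda>_. Q)))"
    by (subst integral_eq_nn_integral) (auto simp: regret_eq_cost_along)
  also have "\<dots> = hist_expect (dem Q) pol T (cost_along (gap Q)) []"
    using nonneg by (simp add: nn_integral_hist_Pi_pmf hist_expect_nonneg[OF prob_valued_dem])
  finally show ?thesis .
qed

section \<open>The hard instance\<close>

lemma val_eq:
  assumes "2 \<le> K" "1 \<le> i" "i \<le> K"
  shows "val K i = (real K - 1) / (2 * real K - 1 - real i)"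
proof -
  have "0 < 2 * real K - 1 - real i"
    using assms by linarith
  moreover have "4 * real K - 2 * real i - 2 = 2 * (2 * real K - 1 - real i)"
    by simp
  ultimately show ?thesis
    unfolding val_def by (simp add: field_simps)
qed

lemma val_last: "2 \<le> K \<Longrightarrow> val K K = 1"
  by (simp add: val_eq)

lemma val_less:
  assumes "2 \<le> K" "1 \<le> i" "i < i'" "i' \<le> K"
  shows "val K i < val K i'"
proof -
  have "(real K - 1) / (2 * real K - 1 - real i) < (real K - 1) / (2 * real K - 1 - real i')"
    using assms by (intro divide_strict_left_mono) auto
  then show ?thesis
    using assms by (simp add: val_eq)
qed

lemma val_le:
  assumes "2 \<le> K" "1 \<le> i" "i \<le> i'" "i' \<le> K"
  shows "val K i \<le> val K i'"
  using val_less[OF assms(1,2) _ assms(4)] assms(3) by (cases "i = i'") auto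

lemma val_bounds:
  assumes "2 \<le> K" "1 \<le> i" "i \<le> K"
  shows "1/2 \<le> val K i" "val K i \<le> 1"
proof -
  have "val K 1 \<le> val K i" "val K i \<le> val K K"
    using assms by (simp_all add: val_le)
  moreover have "val K 1 = 1/2"
    by (simp add: val_def)
  ultimately show "1/2 \<le> val K i" "val K i \<le> 1"
    using assms by (simp_all add: val_last)
qed

lemma inj_on_val: "2 \<le> K \<Longrightarrow> inj_on (val K) {1..K}"
  by (rule inj_onI) (metis atLeastAtMost_iff less_irrefl linorder_neqE_nat val_less)

text \<open>Weights, demand and tail masses of \<open>Q\<^sub>0\<close>, the instance with \<open>\<epsilon> = 0\<close>.\<close>

definition base_wt :: "nat \<Rightarrow> nat \<Rightarrow> real" where
  "base_wt K i = (if i = K then 1/2 else 1 / (2 * real K - 2))"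

definition base_dem :: "nat \<Rightarrow> real \<Rightarrow> real" where
  "base_dem K p = (\<Sum>i\<in>{1..K}. if p \<le> val K i then base_wt K i else 0)"

definition base_tail :: "nat \<Rightarrow> nat \<Rightarrow> real" where
  "base_tail K i = (\<Sum>i'\<in>{i..K}. base_wt K i')"

lemma base_wt_nonneg: "2 \<le> K \<Longrightarrow> 0 \<le> base_wt K i"
  by (simp add: base_wt_def)

lemma base_tail_eq:
  assumes "2 \<le> K" "1 \<le> i" "i \<le> K"
  shows "base_tail K i = (2 * real K - 1 - real i) / (2 * real K - 2)"
proof -
  have "{i..K} = insert K {i..<K}"
    using assms by auto
  then have "base_tail K i = base_wt K K + (\<Sum>i'\<in>{i..<K}. 1 / (2 * real K - 2))"
    by (simp add: base_tail_def base_wt_def)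
  then show ?thesis
    using assms by (simp add: base_wt_def of_nat_diff field_simps)
qed

lemma val_mult_base_tail:
  assumes "2 \<le> K" "1 \<le> i" "i \<le> K"
  shows "val K i * base_tail K i = 1/2"
proof -
  have "0 < 2 * real K - 1 - real i" "0 < 2 * real K - 2"
    using assms by linarith+
  then have "(2 * real K - 1 - real i) * (2 * real K - 2) \<noteq> 0"
    by simp
  then have "(real K - 1) / (2 * real K - 1 - real i) * ((2 * real K - 1 - real i) / (2 * real K - 2)) = 1/2"
    by (simp add: field_simps)
  then show ?thesis
    using assms by (simp add: val_eq base_tail_eq)
qed

lemma base_dem_eq_tail:
  assumes "2 \<le> K" "1 \<le> i" "i \<le> K" "i = 1 \<or> val K (i - 1) < p" "p \<le> val K i"
  shows "base_dem K p = base_tail K i"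
proof -
  have "{i' \<in> {1..K}. p \<le> val K i'} = {i..K}"
  proof (intro set_eqI iffI)
    fix i' assume i': "i' \<in> {i' \<in> {1..K}. p \<le> val K i'}"
    show "i' \<in> {i..K}"
    proof (rule ccontr)
      assume "i' \<notin> {i..K}"
      with i' have "i \<noteq> 1" "i' \<le> i - 1"
        by auto
      with i' assms have "val K i' \<le> val K (i - 1)"
        by (intro val_le) auto
      with i' assms \<open>i \<noteq> 1\<close> show False
        by auto
    qed
  next
    fix i' assume "i' \<in> {i..K}"
    then show "i' \<in> {i' \<in> {1..K}. p \<le> val K i'}"
      using assms val_le[of K i i'] by auto
  qed
  then show ?thesis
    unfolding base_dem_def base_tail_def by (simp add: sum.inter_filter[symmetric])
qed

lemma base_dem_nonneg: "2 \<le> K \<Longrightarrow> 0 \<le> base_dem K p"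
  unfolding base_dem_def by (intro sum_nonneg) (simp add: base_wt_nonneg)

lemma base_dem_le_1: "2 \<le> K \<Longrightarrow> base_dem K p \<le> 1"
proof -
  assume K: "2 \<le> K"
  have "base_dem K p \<le> base_tail K 1"
    unfolding base_dem_def base_tail_def by (intro sum_mono) (simp add: base_wt_nonneg K)
  also have "\<dots> = 1"
    using K by (simp add: base_tail_eq)
  finally show ?thesis .
qed

lemma prob_valued_base_dem: "2 \<le> K \<Longrightarrow> prob_valued (base_dem K)"
  by (simp add: prob_valued_def base_dem_nonneg base_dem_le_1)

lemma base_dem_eq_0: "2 \<le> K \<Longrightarrow> 1 < p \<Longrightarrow> base_dem K p = 0"
  unfolding base_dem_def using val_bounds(2) by (intro sum.neutral) force

lemma base_rev_le_half:
  assumes K: "2 \<le> K"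
  shows "p * base_dem K p \<le> 1/2"
proof (cases "0 < p \<and> p \<le> 1")
  case False
  then show ?thesis
    using base_dem_eq_0[OF K, of p] mult_nonpos_nonneg[of p "base_dem K p"] base_dem_nonneg[OF K, of p]
    by (cases "p \<le> 0") auto
next
  case True
  \<comment> \<open>the price \<open>p\<close> lies in \<open>(v\<^sub>i\<^sub>-\<^sub>1, v\<^sub>i]\<close> for the least \<open>i\<close> with \<open>p \<le> v\<^sub>i\<close>\<close>
  define i where "i = (LEAST i. 1 \<le> i \<and> p \<le> val K i)"
  have ex: "1 \<le> K \<and> p \<le> val K K"
    using True K by (simp add: val_last)
  have i: "1 \<le> i" "p \<le> val K i" "i \<le> K"
    using LeastI[where P = "\<lambda>i. 1 \<le> i \<and> p \<le> val K i", OF ex]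
      Least_le[where P = "\<lambda>i. 1 \<le> i \<and> p \<le> val K i", OF ex]
    by (simp_all add: i_def)
  have "i = 1 \<or> val K (i - 1) < p"
    using not_less_Least[of "i - 1" "\<lambda>i. 1 \<le> i \<and> p \<le> val K i"] i by (force simp: i_def)
  then have "p * base_dem K p = p * base_tail K i"
    using base_dem_eq_tail[OF K i(1,3) _ i(2)] by simp
  also have "\<dots> \<le> val K i * base_tail K i"
    using i True K by (intro mult_right_mono) (simp_all add: base_tail_eq)
  finally show ?thesis
    using val_mult_base_tail[OF K i(1,3)] by simp
qed

lemma real_horizon_pos: "4 \<le> K \<Longrightarrow> K ^ 3 \<le> T \<Longrightarrow> 0 < real T"
  using le_trans[of 1 "K ^ 3" T] by (simp add: Suc_le_eq)

lemma eps_pos: "4 \<le> K \<Longrightarrow> K ^ 3 \<le> T \<Longrightarrow> 0 < eps K T"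
  using real_horizon_pos by (simp add: eps_def)

lemma eps_squared: "4 \<le> K \<Longrightarrow> K ^ 3 \<le> T \<Longrightarrow> (eps K T)^2 = (real K - 2) / (216 * real T)"
  using real_horizon_pos[of K T] by (simp add: eps_def power_mult_distrib power_divide)

lemma eps_le:
  assumes "4 \<le> K" "K ^ 3 \<le> T"
  shows "eps K T \<le> 1 / (4 * (2 * real K - 2))"
proof (rule power2_le_imp_le)
  have K: "4 \<le> real K" and T: "real K ^ 3 \<le> real T"
    using assms of_nat_le_iff[of "K ^ 3" T] by simp_all
  have "(real K - 2) * (real K - 1)^2 \<le> real K * (real K)^2"
    using K by (intro mult_mono power_mono) auto
  then have "(real K - 2) * (4 * (2 * real K - 2))^2 \<le> 216 * real T"
    using K T by (simp add: power_mult_distrib power2_eq_square power3_eq_cube algebra_simps)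
  then show "(eps K T)^2 \<le> (1 / (4 * (2 * real K - 2)))^2"
    using K real_horizon_pos[OF assms] by (simp add: eps_squared[OF assms] power_divide field_simps)
qed (use assms in simp)

lemma wt_eq_base_wt:
  assumes "4 \<le> K" "j \<in> {2..K-1}"
  shows "wt K T j i = base_wt K i + (if i = j then eps K T else 0) - (if i = j - 1 then eps K T else 0)"
  using assms by (auto simp: wt_def base_wt_def)

lemma sum_wt:
  assumes "4 \<le> K" "j \<in> {2..K-1}"
  shows "(\<Sum>i\<in>{1..K}. wt K T j i) = 1"
proof -
  have "(\<Sum>i\<in>{1..K}. base_wt K i) = 1"
    using base_tail_eq[of K 1] assms by (simp add: base_tail_def)
  moreover have "j \<le> K" "1 \<le> j - 1" "j - 1 \<le> K"
    using assms by auto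
  ultimately show ?thesis
    using assms by (simp add: wt_eq_base_wt sum.distrib sum_subtractf)
qed

lemma wt_nonneg:
  assumes "4 \<le> K" "K ^ 3 \<le> T"
  shows "0 \<le> wt K T j i"
proof -
  have "eps K T \<le> 1 / (2 * real K - 2)" "1 / (2 * real K - 2) \<le> 1/2"
    using eps_le[OF assms] assms by (simp_all add: field_simps)
  then show ?thesis
    using eps_pos[OF assms] assms by (simp add: wt_def)
qed

lemma sum_if_val_eq:
  assumes "2 \<le> K" "i \<in> {1..K}"
  shows "(\<Sum>i'\<in>{1..K}. if val K i' = val K i then g i' else 0) = g i"
proof -
  have "(\<Sum>i'\<in>{1..K}. if val K i' = val K i then g i' else 0) = (\<Sum>i'\<in>{1..K}. if i' = i then g i' else 0)"
    using inj_on_val[OF assms(1)] assms(2) by (intro sum.cong) (auto dest: inj_onD)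
  then show ?thesis
    using assms(2) by simp
qed

lemma pmf_Qj:
  assumes a: "4 \<le> K" "K ^ 3 \<le> T" "j \<in> {2..K-1}"
  shows "pmf (Qj K T j) x = (\<Sum>i\<in>{1..K}. if val K i = x then wt K T j i else 0)"
proof -
  let ?f = "\<lambda>x. \<Sum>i\<in>{1..K}. if val K i = x then wt K T j i else 0"
  have "?f x = 0" if "x \<notin> val K ` {1..K}" for x
    using that by (intro sum.neutral) auto
  then have "(\<integral>\<^sup>+x. ennreal (?f x) \<partial>count_space UNIV) = (\<Sum>x\<in>val K ` {1..K}. ennreal (?f x))"
    by (intro nn_integral_count_space') auto
  also have "\<dots> = (\<Sum>i\<in>{1..K}. ennreal (?f (val K i)))"
    using a inj_on_val[of K] by (simp only: sum.reindex o_def)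
  also have "\<dots> = (\<Sum>i\<in>{1..K}. ennreal (wt K T j i))"
    by (intro sum.cong refl arg_cong[where f = ennreal] sum_if_val_eq) (use a in auto)
  also have "\<dots> = 1"
    using a sum_wt[of K j T] by (simp add: sum_ennreal wt_nonneg)
  finally show ?thesis
    unfolding Qj_def using a by (subst pmf_embed_pmf) (auto intro!: sum_nonneg simp: wt_nonneg)
qed

lemma pmf_Qj_val:
  assumes "4 \<le> K" "K ^ 3 \<le> T" "j \<in> {2..K-1}" "i \<in> {1..K}"
  shows "pmf (Qj K T j) (val K i) = wt K T j i"
  unfolding pmf_Qj[OF assms(1-3)] by (rule sum_if_val_eq) (use assms in auto)

lemma dem_Qj:
  assumes a: "4 \<le> K" "K ^ 3 \<le> T" "j \<in> {2..K-1}"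
  shows "dem (Qj K T j) p = (\<Sum>i\<in>{1..K}. if p \<le> val K i then wt K T j i else 0)"
proof -
  have "dem (Qj K T j) p = measure_pmf.expectation (Qj K T j) (indicator {v. p \<le> v})"
    unfolding dem_def by simp
  also have "\<dots> = (\<Sum>x\<in>val K ` {1..K}. indicator {v. p \<le> v} x * pmf (Qj K T j) x)"
    by (rule integral_measure_pmf_real) (auto simp: set_pmf_eq pmf_Qj[OF a] intro!: sum.neutral)
  also have "\<dots> = (\<Sum>i\<in>{1..K}. indicator {v. p \<le> v} (val K i) * pmf (Qj K T j) (val K i))"
    using a inj_on_val[of K] by (simp only: sum.reindex o_def)
  also have "\<dots> = (\<Sum>i\<in>{1..K}. if p \<le> val K i then wt K T j i else 0)"
    using a by (intro sum.cong) (auto simp: pmf_Qj_val)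
  finally show ?thesis .
qed

definition bump_interval :: "nat \<Rightarrow> nat \<Rightarrow> real set" where
  "bump_interval K j = {val K (j - 1)<..val K j}"

lemma dem_Qj_eq_base_dem:
  assumes a: "4 \<le> K" "K ^ 3 \<le> T" "j \<in> {2..K-1}"
  shows "dem (Qj K T j) p = base_dem K p + eps K T * indicator (bump_interval K j) p"
proof -
  have j: "j \<in> {1..K}" "j - 1 \<in> {1..K}" "val K (j - 1) < val K j"
    using a by (auto intro: val_less)
  have "dem (Qj K T j) p = base_dem K p + (if p \<le> val K j then eps K T else 0)
                                         - (if p \<le> val K (j - 1) then eps K T else 0)"
    using a j(1,2) unfolding dem_Qj[OF a] base_dem_def
    by (simp add: wt_eq_base_wt if_distrib[of "\<lambda>x. x - _"] if_distrib[of "\<lambda>x. x + _"] sum.distrib sum_subtractf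
        sum.If_cases Int_def)
  then show ?thesis
    using j(3) by (auto simp: bump_interval_def)
qed

section \<open>Regret under \<open>Q\<^sub>j\<close>\<close>

lemma bdd_above_rev: "bdd_above (rev Q ` {0..1})"
proof (rule bdd_aboveI)
  fix y assume "y \<in> rev Q ` {0..1}"
  then obtain x where "x \<in> {0..1}" "y = rev Q x" by auto
  then show "y \<le> 1"
    using mult_mono[of x 1 "dem Q x" 1] dem_nonneg[of Q x] dem_le_1[of Q x] by (simp add: rev_def)
qed

lemma bump_interval_bounds:
  assumes "4 \<le> K" "j \<in> {2..K-1}"
  shows "val K j \<in> bump_interval K j" "bump_interval K j \<subseteq> {1/2<..1}"
proof -
  have "1/2 \<le> val K (j - 1)" "val K (j - 1) < val K j" "val K j \<le> 1"
    using val_bounds[of K "j - 1"] val_bounds[of K j] val_less[of K "j - 1" j] assms by auto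
  then show "val K j \<in> bump_interval K j" "bump_interval K j \<subseteq> {1/2<..1}"
    by (auto simp: bump_interval_def)
qed

lemma rev_Qj_val:
  assumes a: "4 \<le> K" "K ^ 3 \<le> T" "j \<in> {2..K-1}"
  shows "rev (Qj K T j) (val K j) = 1/2 + eps K T * val K j"
proof -
  have "base_dem K (val K j) = base_tail K j"
    using a val_less[of K "j - 1" j] by (intro base_dem_eq_tail) auto
  then have "rev (Qj K T j) (val K j) = val K j * base_tail K j + eps K T * val K j"
    using bump_interval_bounds(1)[OF a(1,3)]
    by (simp add: rev_def dem_Qj_eq_base_dem[OF a] algebra_simps)
  moreover have "val K j * base_tail K j = 1/2"
    using a by (intro val_mult_base_tail) auto
  ultimately show ?thesis
    by simp
qed

text \<open>Off the bump interval of \<open>j\<close>, a price earns at most the base revenue \<open>1/2\<close>, while \<open>v\<^sub>j\<close> earns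
  \<open>1/2 + \<epsilon> v\<^sub>j \<ge> 1/2 + \<epsilon>/2\<close>.\<close>

lemma gap_Qj_ge:
  assumes a: "4 \<le> K" "K ^ 3 \<le> T" "j \<in> {2..K-1}"
  shows "eps K T / 2 * (1 - indicator (bump_interval K j) p) \<le> gap (Qj K T j) p"
proof -
  define OPT where "OPT = (SUP x\<in>{0..1}. rev (Qj K T j) x)"
  have le_OPT: "rev (Qj K T j) x \<le> OPT" if "x \<in> {0..1}" for x
    unfolding OPT_def using that bdd_above_rev by (rule cSUP_upper)
  show ?thesis
  proof (cases "p \<in> bump_interval K j")
    case True
    then show ?thesis
      using bump_interval_bounds(2)[OF a(1,3)] le_OPT[of p] by (auto simp: gap_def OPT_def[symmetric])
  next
    case False
    have "rev (Qj K T j) p \<le> 1/2"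
      using False a base_rev_le_half[of K p] by (simp add: rev_def dem_Qj_eq_base_dem)
    moreover have "eps K T * (1/2) \<le> eps K T * val K j"
      using a eps_pos[OF a(1,2)] by (intro mult_left_mono val_bounds) auto
    moreover have "1 \<le> j" "j \<le> K"
      using a by auto
    then have "1/2 \<le> val K j" "val K j \<le> 1"
      using a(1) val_bounds[of K j] by simp_all
    ultimately show ?thesis
      using False le_OPT[of "val K j"] rev_Qj_val[OF a] by (simp add: gap_def OPT_def[symmetric])
  qed
qed

lemma gap_Qj_nonneg:
  assumes "4 \<le> K" "K ^ 3 \<le> T" "j \<in> {2..K-1}"
  shows "0 \<le> gap (Qj K T j) p"
proof -
  have "0 \<le> eps K T / 2 * (1 - indicator (bump_interval K j) p)"
    using eps_pos[OF assms(1,2)] by (simp split: split_indicator)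
  then show ?thesis
    using gap_Qj_ge[OF assms, of p] by linarith
qed

definition chi_rate :: "nat \<Rightarrow> nat \<Rightarrow> real" where
  "chi_rate K j = 2 * (real K - 1) * (real K - 2) / (81 * (real j - 1))"

lemma chi_square_bump_le:
  assumes a: "4 \<le> K" "K ^ 3 \<le> T" "j \<in> {2..K-1}"
  defines "q \<equiv> base_tail K j + eps K T"
  shows "0 < q" "q < 1" "(eps K T)^2 / (q * (1 - q)) \<le> chi_rate K j / real T"
proof -
  define r where "r = 2 * real K - 2"
  define e where "e = eps K T"
  have K: "4 \<le> real K" and j: "2 \<le> real j" "real j \<le> real K - 1"
    using a by auto
  have r: "0 < r"
    using K by (simp add: r_def)
  have e: "0 < e" "e \<le> 1 / (4 * r)"
    using eps_pos[OF a(1,2)] eps_le[OF a(1,2)] by (simp_all add: e_def r_def)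
  have q: "q = 1 - (real j - 1) / r + e"
    using r base_tail_eq[of K j] a(1,3) by (auto simp: q_def e_def r_def field_simps)
  have "1 / r \<le> (real j - 1) / r"
    using j r by (intro divide_right_mono) auto
  moreover have "1 / (4 * r) = (1/4) * (1 / r)"
    by simp
  ultimately have one_minus_q: "(3/4) * ((real j - 1) / r) \<le> 1 - q"
    using e(2) q by linarith
  have "(real j - 1) / r \<le> 1/2"
    using j r by (simp add: r_def field_simps)
  then have q_half: "1/2 \<le> q"
    using e(1) q by linarith
  have jr: "0 < (real j - 1) / r"
    using j r by simp
  show q_pos: "0 < q" and q_lt_1: "q < 1"
    using q_half one_minus_q jr by linarith+
  have prod: "(1/2) * ((3/4) * ((real j - 1) / r)) \<le> q * (1 - q)"
    by (rule mult_mono[OF q_half one_minus_q]) (use q_half jr in linarith)+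
  have "e^2 / (q * (1 - q)) \<le> e^2 / ((1/2) * ((3/4) * ((real j - 1) / r)))"
    using prod jr q_pos q_lt_1 by (intro divide_left_mono mult_pos_pos) auto
  also have "\<dots> = chi_rate K j / real T"
    using j r real_horizon_pos[OF a(1,2)]
    by (simp add: e_def eps_squared[OF a(1,2)] chi_rate_def r_def field_simps)
  finally show "(eps K T)^2 / (q * (1 - q)) \<le> chi_rate K j / real T"
    by (simp add: e_def)
qed

lemma ln_convex_comb_base_dem_le:
  assumes a: "4 \<le> K" "K ^ 3 \<le> T" "j \<in> {2..K-1}" and x: "0 < x1" "0 < x2"
  shows "base_dem K p * ln x1 + (1 - base_dem K p) * ln x2
           \<le> chi_rate K j / real T * indicator (bump_interval K j) p
             + ln (dem (Qj K T j) p * x1 + (1 - dem (Qj K T j) p) * x2)"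
proof (cases "p \<in> bump_interval K j")
  case False
  then show ?thesis
    using ln_convex_comb_ge[OF base_dem_nonneg base_dem_le_1 x] a by (simp add: dem_Qj_eq_base_dem)
next
  case True
  then have q0: "base_dem K p = base_tail K j"
    using a by (intro base_dem_eq_tail) (auto simp: bump_interval_def)
  have "base_dem K p * ln x1 + (1 - base_dem K p) * ln x2
      \<le> (eps K T)^2 / ((base_tail K j + eps K T) * (1 - (base_tail K j + eps K T)))
         + ln ((base_tail K j + eps K T) * x1 + (1 - (base_tail K j + eps K T)) * x2)"
    using ln_convex_comb_chi_square[OF _ _ _ _ x, of "base_tail K j" "base_tail K j + eps K T"]
      chi_square_bump_le(1,2)[OF a] base_dem_nonneg[of K p] base_dem_le_1[of K p] a
    by (simp add: q0)
  then show ?thesis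
    using chi_square_bump_le(3)[OF a] True a by (simp add: q0 dem_Qj_eq_base_dem)
qed

section \<open>Rounds spent in a bump interval\<close>

definition visits :: "nat \<Rightarrow> nat \<Rightarrow> (real \<times> bool) list \<Rightarrow> real" where
  "visits K j h = cost_along (indicator (bump_interval K j)) h"

definition visit_freq :: "(real \<Rightarrow> real) \<Rightarrow> policy \<Rightarrow> nat \<Rightarrow> nat \<Rightarrow> nat \<Rightarrow> real" where
  "visit_freq d pol K T j = hist_expect d pol T (\<lambda>h. visits K j h / real T) []"

lemma visits_nonneg: "0 \<le> visits K j h"
  unfolding visits_def by (rule cost_along_nonneg) simp

lemma visits_le_length: "visits K j h \<le> real (length h)"
  using cost_along_mono[of "indicator (bump_interval K j)" "\<lambda>_. 1" h]
  by (simp add: visits_def cost_along_const indicator_le_1)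

lemma disjoint_family_on_bump_interval:
  assumes "4 \<le> K"
  shows "disjoint_family_on (bump_interval K) {2..K-1}"
  unfolding disjoint_family_on_def
proof (intro ballI impI)
  have less: "bump_interval K j \<inter> bump_interval K j' = {}"
    if "j \<in> {2..K-1}" "j' \<in> {2..K-1}" "j < j'" for j j'
  proof -
    have "val K j \<le> val K (j' - 1)"
      using that assms by (intro val_le) auto
    then show ?thesis
      by (auto simp: bump_interval_def)
  qed
  fix j j' assume "j \<in> {2..K-1}" "j' \<in> {2..K-1}" "j \<noteq> j'"
  then show "bump_interval K j \<inter> bump_interval K j' = {}"
    using less[of j j'] less[of j' j] by (cases "j < j'") auto
qed

lemma sum_indicator_bump_interval_le_1:
  assumes "4 \<le> K"
  shows "(\<Sum>j\<in>{2..K-1}. indicator (bump_interval K j) p) \<le> (1::real)"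
proof (cases "\<exists>j\<in>{2..K-1}. p \<in> bump_interval K j")
  case True
  then obtain j where "j \<in> {2..K-1}" "p \<in> bump_interval K j" ..
  then show ?thesis
    using sum_indicator_disjoint_family[OF disjoint_family_on_bump_interval[OF assms], of p j "\<lambda>_. 1 :: real"]
    by simp
next
  case False
  then show ?thesis by simp
qed

lemma sum_visits_le_length:
  assumes "4 \<le> K"
  shows "(\<Sum>j\<in>{2..K-1}. visits K j h) \<le> real (length h)"
proof -
  have "(\<Sum>j\<in>{2..K-1}. visits K j h) = cost_along (\<lambda>p. \<Sum>j\<in>{2..K-1}. indicator (bump_interval K j) p) h"
    unfolding visits_def by (simp add: cost_along_sum)
  also have "\<dots> \<le> cost_along (\<lambda>_. 1) h"
    using sum_indicator_bump_interval_le_1[OF assms] by (rule cost_along_mono)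
  finally show ?thesis
    by (simp add: cost_along_const)
qed

lemma visits_div_le_1: "length h = T \<Longrightarrow> 0 < T \<Longrightarrow> visits K j h / real T \<le> 1"
  using visits_le_length[of K j h] by simp

lemma visit_freq_nonneg: "prob_valued d \<Longrightarrow> 0 \<le> visit_freq d pol K T j"
  unfolding visit_freq_def by (intro hist_expect_nonneg divide_nonneg_nonneg visits_nonneg) auto

lemma visit_freq_le_1:
  assumes "prob_valued d" "0 < T"
  shows "visit_freq d pol K T j \<le> 1"
proof -
  have "visit_freq d pol K T j \<le> hist_expect d pol T (\<lambda>_. 1) []"
    unfolding visit_freq_def
  proof (rule hist_expect_mono[OF assms(1)])
    fix h :: "(real \<times> bool) list" assume "length h = length [] + T"
    then show "visits K j h / real T \<le> 1"
      using visits_div_le_1 assms(2) by simp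
  qed
  then show ?thesis by simp
qed

lemma sum_visit_freq_le_1:
  assumes "prob_valued d" "4 \<le> K" "0 < T"
  shows "(\<Sum>j\<in>{2..K-1}. visit_freq d pol K T j) \<le> 1"
proof -
  have "(\<Sum>j\<in>{2..K-1}. visit_freq d pol K T j) = hist_expect d pol T (\<lambda>h. (\<Sum>j\<in>{2..K-1}. visits K j h) / real T) []"
    unfolding visit_freq_def by (simp add: hist_expect_sum sum_divide_distrib)
  also have "\<dots> \<le> hist_expect d pol T (\<lambda>_. 1) []"
  proof (rule hist_expect_mono[OF assms(1)])
    fix h :: "(real \<times> bool) list" assume "length h = length [] + T"
    then show "(\<Sum>j\<in>{2..K-1}. visits K j h) / real T \<le> 1"
      using sum_visits_le_length[OF assms(2), of h] assms(3) by simp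
  qed
  finally show ?thesis by simp
qed

lemma expected_regret_Qj_ge:
  assumes a: "4 \<le> K" "K ^ 3 \<le> T" "j \<in> {2..K-1}"
  shows "eps K T * real T / 2 * (1 - visit_freq (dem (Qj K T j)) pol K T j)
           \<le> measure_pmf.expectation (Pi_pmf {..<T} 0 (\<lambda>_. Qj K T j)) (\<lambda>V. regret (Qj K T j) pol V T)"
proof -
  let ?Q = "Qj K T j"
  let ?c = "eps K T * real T / 2"
  have T: "0 < real T"
    using real_horizon_pos[OF a(1,2)] .
  have "?c + (- ?c) * (visits K j h / real T) \<le> cost_along (gap ?Q) h" if "length h = T" for h
  proof -
    have "cost_along (\<lambda>p. eps K T / 2 * 1 + (- (eps K T / 2)) * indicator (bump_interval K j) p) h
        \<le> cost_along (gap ?Q) h"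
      using gap_Qj_ge[OF a] by (intro cost_along_mono) (simp add: algebra_simps)
    moreover have "cost_along (\<lambda>p. eps K T / 2 * 1 + (- (eps K T / 2)) * indicator (bump_interval K j) p) h
        = ?c + (- ?c) * (visits K j h / real T)"
      using that T by (simp only: cost_along_linear) (simp add: cost_along_const visits_def)
    ultimately show ?thesis
      by simp
  qed
  then have "hist_expect (dem ?Q) pol T (\<lambda>h. ?c + (- ?c) * (visits K j h / real T)) []
      \<le> hist_expect (dem ?Q) pol T (cost_along (gap ?Q)) []"
    by (intro hist_expect_mono[OF prob_valued_dem]) simp
  moreover have "hist_expect (dem ?Q) pol T (\<lambda>h. ?c + (- ?c) * (visits K j h / real T)) []
      = ?c * (1 - visit_freq (dem ?Q) pol K T j)"
    by (simp only: hist_expect_add_const hist_expect_scale visit_freq_def[symmetric]) (simp add: algebra_simps)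
  ultimately show ?thesis
    using gap_Qj_nonneg[OF a] by (simp add: expectation_regret_eq_hist_expect)
qed

lemma visit_freq_Qj_le:
  assumes a: "4 \<le> K" "K ^ 3 \<le> T" "j \<in> {2..K-1}"
  shows "visit_freq (dem (Qj K T j)) pol K T j - visit_freq (base_dem K) pol K T j
           \<le> (81/26) * chi_rate K j * visit_freq (base_dem K) pol K T j + 13/81"
proof -
  let ?c = "\<lambda>p. chi_rate K j / real T * indicator (bump_interval K j) p"
  have T: "0 < real T"
    using real_horizon_pos[OF a(1,2)] .
  have cost: "cost_along ?c = (\<lambda>h. chi_rate K j * (visits K j h / real T))"
    by (rule ext, simp only: cost_along_scale visits_def) simp
  have "(26/81) * (visit_freq (dem (Qj K T j)) pol K T j - visit_freq (base_dem K) pol K T j)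
      \<le> hist_expect (base_dem K) pol T (cost_along ?c) [] + (26/81)^2 / 2"
    unfolding visit_freq_def
  proof (rule hist_expect_diff_le)
    show "prob_valued (base_dem K)"
      using a by (simp add: prob_valued_base_dem)
    show "\<And>h. length h = T \<Longrightarrow> 0 \<le> visits K j h / real T \<and> visits K j h / real T \<le> 1"
      using visits_nonneg visits_div_le_1 T by simp
  qed (use ln_convex_comb_base_dem_le[OF a] prob_valued_dem in auto)
  also have "hist_expect (base_dem K) pol T (cost_along ?c) [] = chi_rate K j * visit_freq (base_dem K) pol K T j"
    unfolding cost by (simp only: hist_expect_scale visit_freq_def)
  finally show ?thesis
    by (simp add: power2_eq_square algebra_simps)
qed

text \<open>Write \<open>\<theta> = (j - 1)/(K - 2) \<in> [0,1]\<close>; the bound follows from \<open>b = (1 - \<theta>) b + \<theta> b\<close>, using \<open>b \<le> 1\<close>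
  for the first summand and the hypothesis for the second, where \<open>\<theta> \<cdot> chi_rate K j = 2 (K - 1)/81\<close>.\<close>

lemma visit_freq_Qj_le_affine:
  assumes K: "4 \<le> K" and j: "j \<in> {2..K-1}"
    and b: "b \<le> 1" and a: "0 \<le> a" and ba: "b - a \<le> (81/26) * chi_rate K j * a + 13/81"
  shows "b \<le> 1 - (68/81) * ((real j - 1) / (real K - 2)) + (1 + (real K - 1) / 13) * a"
proof -
  define \<theta> where "\<theta> = (real j - 1) / (real K - 2)"
  have jr: "2 \<le> real j" "real j \<le> real K - 1" and Kr: "4 \<le> real K"
    using j K by auto
  have \<theta>: "0 \<le> \<theta>" "\<theta> \<le> 1"
    using jr Kr by (auto simp: \<theta>_def field_simps)
  have \<theta>_chi: "\<theta> * chi_rate K j = 2 * (real K - 1) / 81"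
  proof -
    define u v where "u = real j - 1" and "v = real K - 2"
    have "0 < u" "0 < v"
      using jr Kr by (simp_all add: u_def v_def)
    then have "u / v * (2 * (real K - 1) * v / (81 * u)) = 2 * (real K - 1) / 81"
      by (simp add: field_simps)
    then show ?thesis
      by (simp add: \<theta>_def chi_rate_def u_def v_def)
  qed
  have "b = (1 - \<theta>) * b + \<theta> * b"
    by (simp add: algebra_simps)
  also have "\<dots> \<le> (1 - \<theta>) * 1 + \<theta> * (a + (81/26) * chi_rate K j * a + 13/81)"
    using \<theta> b ba by (intro add_mono mult_left_mono) auto
  also have "\<dots> = 1 - \<theta> + \<theta> * a + (81/26) * (\<theta> * chi_rate K j) * a + 13/81 * \<theta>"
    by (simp add: algebra_simps)
  also have "\<dots> = 1 - \<theta> + \<theta> * a + (real K - 1) / 13 * a + 13/81 * \<theta>"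
    unfolding \<theta>_chi by simp
  also have "\<dots> \<le> 1 - \<theta> + a + (real K - 1) / 13 * a + 13/81 * \<theta>"
    using \<theta> a mult_left_le_one_le[of a \<theta>] by simp
  finally show ?thesis
    by (simp add: \<theta>_def[symmetric] algebra_simps)
qed

lemma sum_real_minus_1: "(\<Sum>j\<in>{2..m+1}. real j - 1) = real m * (real m + 1) / 2"
proof (induction m)
  case 0
  then show ?case by simp
next
  case (Suc m)
  have "{2..Suc m + 1} = insert (m + 2) {2..m+1}"
    by auto
  then show ?case
    using Suc by (simp add: field_simps)
qed

lemma sum_one_minus_visit_freq_Qj_ge:
  assumes a: "4 \<le> K" "K ^ 3 \<le> T"
  shows "(real K - 2) / 100 \<le> (\<Sum>j\<in>{2..K-1}. 1 - visit_freq (dem (Qj K T j)) pol K T j)"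
proof -
  define J where "J = {2..K-1}"
  define n where "n = real K - 2"
  let ?a = "\<lambda>j. visit_freq (base_dem K) pol K T j"
  let ?b = "\<lambda>j. visit_freq (dem (Qj K T j)) pol K T j"
  have T: "0 < T"
    using real_horizon_pos[OF a] by simp
  have n: "2 \<le> n" "real (card J) = n"
    using a by (simp_all add: J_def n_def of_nat_diff)
  have b_le: "?b j \<le> 1 - (68/81) * ((real j - 1) / n) + (1 + (n + 1) / 13) * ?a j" if "j \<in> J" for j
    using visit_freq_Qj_le_affine[OF a(1), of j "?b j" "?a j"] visit_freq_Qj_le[OF a, of j pol] that T a
    by (simp add: J_def n_def visit_freq_le_1 visit_freq_nonneg prob_valued_dem prob_valued_base_dem)
  have sum_a: "(\<Sum>j\<in>J. ?a j) \<le> 1"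
    unfolding J_def using a T by (intro sum_visit_freq_le_1 prob_valued_base_dem) auto
  have "J = {2..(K - 2) + 1}"
    using a by (auto simp: J_def)
  then have "(\<Sum>j\<in>J. real j - 1) = n * (n + 1) / 2"
    using a by (simp only: sum_real_minus_1) (simp add: n_def of_nat_diff)
  then have sum_\<theta>: "(\<Sum>j\<in>J. (real j - 1) / n) = (n + 1) / 2"
    using n by (simp add: sum_divide_distrib[symmetric])
  have "(\<Sum>j\<in>J. ?b j) \<le> (\<Sum>j\<in>J. 1 - (68/81) * ((real j - 1) / n) + (1 + (n + 1) / 13) * ?a j)"
    using b_le by (rule sum_mono)
  also have "\<dots> = real (card J) - (68/81) * (\<Sum>j\<in>J. (real j - 1) / n) + (1 + (n + 1) / 13) * (\<Sum>j\<in>J. ?a j)"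
    by (simp add: sum.distrib sum_subtractf sum_distrib_left)
  also have "\<dots> = n - (68/81) * ((n + 1) / 2) + (1 + (n + 1) / 13) * (\<Sum>j\<in>J. ?a j)"
    unfolding sum_\<theta> n(2) ..
  also have "\<dots> \<le> n - (68/81) * ((n + 1) / 2) + (1 + (n + 1) / 13)"
    using sum_a n by (simp add: mult_left_le)
  finally have sum_b: "(\<Sum>j\<in>J. ?b j) \<le> n - (68/81) * ((n + 1) / 2) + (1 + (n + 1) / 13)" .
  have "(\<Sum>j\<in>J. 1 - ?b j) = n - (\<Sum>j\<in>J. ?b j)"
    using n(2) by (simp add: sum_subtractf)
  then have "n / 100 \<le> (\<Sum>j\<in>J. 1 - ?b j)"
    using sum_b n(1) by (simp add: field_simps)
  then show ?thesis
    by (simp add: J_def n_def)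
qed

lemma eps_horizon_ge:
  assumes a: "4 \<le> K" "K ^ 3 \<le> T"
  shows "sqrt (real K * real T) / 21 \<le> eps K T * real T"
proof -
  have T: "0 < real T" and K: "4 \<le> real K"
    using real_horizon_pos[OF a] a by simp_all
  have "real K * real T / 441 \<le> (real K - 2) * real T / 216"
    using K T by (simp add: field_simps)
  also have "\<dots> = (real K - 2) / (216 * real T) * (real T)^2"
    using T by (simp add: power2_eq_square)
  also have "\<dots> = (eps K T * real T)^2"
    by (simp add: power_mult_distrib eps_squared[OF a])
  finally have "sqrt (real K * real T / 441) \<le> eps K T * real T"
    using eps_pos[OF a] T by (simp add: real_le_lsqrt)
  then show ?thesis
    by (simp add: real_sqrt_divide)
qed

lemma exp_regret_ge:
  assumes a: "4 \<le> K" "K ^ 3 \<le> T"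
  shows "sqrt (real K * real T) / 4200 \<le> exp_regret K T pol"
proof -
  let ?E = "\<lambda>j. measure_pmf.expectation (Pi_pmf {..<T} 0 (\<lambda>_. Qj K T j)) (\<lambda>V. regret (Qj K T j) pol V T)"
  let ?c = "eps K T * real T / 2"
  have n: "real (card {2..K-1}) = real K - 2" "2 \<le> real K - 2"
    using a by (simp_all add: of_nat_diff)
  have c: "0 \<le> ?c"
    using eps_pos[OF a] by simp
  have "?c * ((real K - 2) / 100) \<le> (\<Sum>j\<in>{2..K-1}. ?c * (1 - visit_freq (dem (Qj K T j)) pol K T j))"
    using mult_left_mono[OF sum_one_minus_visit_freq_Qj_ge[OF a, of pol] c] by (simp add: sum_distrib_left)
  also have "\<dots> \<le> (\<Sum>j\<in>{2..K-1}. ?E j)"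
    using expected_regret_Qj_ge[OF a] by (intro sum_mono) auto
  finally have "eps K T * real T / 200 \<le> (\<Sum>j\<in>{2..K-1}. ?E j) / (real K - 2)"
    using n by (simp add: field_simps)
  also have "\<dots> = exp_regret K T pol"
    unfolding exp_regret_def using a n by (subst integral_pmf_of_set) auto
  finally show ?thesis
    using eps_horizon_ge[OF a] by simp
qed

theorem mainTheorem10:
  "\<exists>c>0. \<forall>(K::nat) (T::nat). K \<ge> 4 \<longrightarrow> T \<ge> K ^ 3 \<longrightarrow>
     (\<forall>M :: policy measure. prob_space M \<longrightarrow>
        (\<forall>pol\<in>space M. \<forall>h. pol h \<in> {0..1}) \<longrightarrow>
        (\<integral>\<^sup>+ pol. ennreal (exp_regret K T pol) \<partial>M) \<ge> ennreal (c * sqrt (real K * real T)))"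
proof (intro exI[of _ "1/4200"] conjI allI impI)
  \<comment> \<open>the bound holds for every deterministic policy, so the range of the prices is irrelevant\<close>
  fix K T :: nat and M :: "policy measure"
  assume K: "K \<ge> 4" and T: "T \<ge> K ^ 3" and M: "prob_space M"
  have "ennreal (1/4200 * sqrt (real K * real T)) = (\<integral>\<^sup>+ pol. ennreal (1/4200 * sqrt (real K * real T)) \<partial>M)"
    using prob_space.emeasure_space_1[OF M] by simp
  also have "\<dots> \<le> (\<integral>\<^sup>+ pol. ennreal (exp_regret K T pol) \<partial>M)"
    using exp_regret_ge[OF K T] by (intro nn_integral_mono ennreal_leI) simp
  finally show "ennreal (1/4200 * sqrt (real K * real T)) \<le> (\<integral>\<^sup>+ pol. ennreal (exp_regret K T pol) \<partial>M)" .
qed simp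

end
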